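(* (i) There is a function $\delta:\mathbb{N}\to[0,\infty)$ with $\delta(n)\to 0$ as $n\to\infty$ such that for every positive integer $n$ for which a Hadamard matrix of order $n+1$ exists, there exists a real orthogonal $n\times n$ matrix $M=(m_{i,j})$ with $(1-\delta(n))\frac{1}{\sqrt{n}}\le |m_{i,j}|\le (1+\delta(n))\frac{1}{\sqrt{n}}$ for all $i,j$ (i.e. all entries have modulus $(1+o(1))\frac{1}{\sqrt{n}}$). In particular, this is the case if $n=p^r$ where $p$ is a prime with $p\equiv 3 \pmod 4$ and $r$ is odd. (ii) If $n$ is a prime with $n\equiv 3\pmod 4$, then the matrix $M$ in (i) can be chosen to be circulant.
   Context: A Hadamard matrix of order $N$ is an $N\times N$ matrix with entries in $\{+1,-1\}$ whose rows are pairwise orthogonal. A matrix $M=(m_{i,j})_{i,j\in\mathbb{Z}_n}$ is circulant if $m_{i,j}$ depends only on $j-i \bmod n$. *)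

theory Defs
  imports "HOL-Analysis.Analysis" "HOL-Computational_Algebra.Primes"
begin

text \<open>Square matrices of order n are represented as functions nat => nat => 'a,
  only the entries with indices i, j < n being relevant.\<close>

definition hadamard_matrix :: "nat \<Rightarrow> (nat \<Rightarrow> nat \<Rightarrow> int) \<Rightarrow> bool" where
  "hadamard_matrix N H \<longleftrightarrow>
     (\<forall>i<N. \<forall>j<N. H i j = 1 \<or> H i j = -1) \<and>
     (\<forall>i<N. \<forall>j<N. i \<noteq> j \<longrightarrow> (\<Sum>k<N. H i k * H j k) = 0)"

definition hadamard_exists :: "nat \<Rightarrow> bool" where
  "hadamard_exists N \<longleftrightarrow> (\<exists>H. hadamard_matrix N H)"

definition orthogonal_mat :: "nat \<Rightarrow> (nat \<Rightarrow> nat \<Rightarrow> real) \<Rightarrow> bool" where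
  "orthogonal_mat n M \<longleftrightarrow>
     (\<forall>i<n. \<forall>j<n. (\<Sum>k<n. M i k * M j k) = (if i = j then 1 else 0))"

definition circulant_mat :: "nat \<Rightarrow> (nat \<Rightarrow> nat \<Rightarrow> real) \<Rightarrow> bool" where
  "circulant_mat n M \<longleftrightarrow>
     (\<forall>i<n. \<forall>j<n. \<forall>i'<n. \<forall>j'<n.
        (int j - int i) mod int n = (int j' - int i') mod int n \<longrightarrow> M i j = M i' j')"

definition flat_entries :: "real \<Rightarrow> nat \<Rightarrow> (nat \<Rightarrow> nat \<Rightarrow> real) \<Rightarrow> bool" where
  "flat_entries d n M \<longleftrightarrow>
     (\<forall>i<n. \<forall>j<n. (1 - d) * (1 / sqrt n) \<le> \<bar>M i j\<bar> \<and> \<bar>M i j\<bar> \<le> (1 + d) * (1 / sqrt n))"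

end

theory Submission
  imports Defs "HOL-Real_Asymp.Real_Asymp" "HOL-Algebra.Algebraic_Closure"
    "HOL-Algebra.Multiplicative_Group" "HOL-Number_Theory.Residues"
begin

hide_const (open) Divisibility.prime

text \<open>
  If H is a Hadamard matrix of order n + 1 whose first row and first column consist of ones,
  deleting them leaves a \<plusminus>1 matrix C with C C^T = (n + 1) I - J and C J = -J.
  For a = 1/\<surd>(n + 1) and b = (1 + a)/n the matrix a C + b J is then orthogonal, and its
  entries a + b and b - a both have modulus (1 + o(1))/\<surd>n.

  For q \<equiv> 3 (mod 4) a prime power, the Paley matrix C_ij = \<chi>(x_j - x_i) - \<delta>_ij over
  GF(q), \<chi> the quadratic character, is such a block; the key input is Jacobsthal's identity
  \<Sum>_u \<chi>(u) \<chi>(u + e) = -1 for e \<noteq> 0. Indexing GF(p) by 0, ..., p - 1 makes it circulant.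
  The field GF(p^r) is the set of roots of X^(p^r) - X in an algebraic closure of \<int>/p: it is
  closed under the field operations by the Frobenius identity, and it has p^r elements since
  X - a divides X^(p^r) - X only once.
\<close>

section \<open>Hadamard cores\<close>

text \<open>The block left by deleting the all-one first row and column of a normalised Hadamard
  matrix of order n + 1. The diagonal of C C^T is automatic for \<plusminus>1 entries.\<close>

definition hadamard_core :: "nat \<Rightarrow> (nat \<Rightarrow> nat \<Rightarrow> int) \<Rightarrow> bool" where
  "hadamard_core n C \<longleftrightarrow>
     (\<forall>i<n. \<forall>j<n. C i j = 1 \<or> C i j = -1) \<and>
     (\<forall>i<n. \<forall>j<n. i \<noteq> j \<longrightarrow> (\<Sum>k<n. C i k * C j k) = -1) \<and>
     (\<forall>i<n. (\<Sum>k<n. C i k) = -1)"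

lemma sum_products_sign_vector:
  fixes x :: "nat \<Rightarrow> 'a :: comm_ring_1"
  assumes "\<forall>k<n. x k = 1 \<or> x k = -1"
  shows "(\<Sum>k<n. x k * x k) = of_nat n"
proof -
  have "(\<Sum>k<n. x k * x k) = (\<Sum>k<n. 1)"
    using assms by (intro sum.cong) auto
  then show ?thesis by simp
qed

lemma hadamard_matrix_sign_change:
  assumes H: "hadamard_matrix N H"
    and r: "\<forall>i<N. r i = 1 \<or> r i = -1" and c: "\<forall>j<N. c j = 1 \<or> c j = -1"
  shows "hadamard_matrix N (\<lambda>i j. r i * H i j * c j)"
  unfolding hadamard_matrix_def
proof (intro conjI allI impI)
  fix i j assume "i < N" "j < N"
  then have "r i = 1 \<or> r i = -1" "H i j = 1 \<or> H i j = -1" "c j = 1 \<or> c j = -1"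
    using H r c unfolding hadamard_matrix_def by blast+
  then show "r i * H i j * c j = 1 \<or> r i * H i j * c j = -1" by auto
next
  fix i j assume "i < N" "j < N" "i \<noteq> j"
  have "r i * H i k * c k * (r j * H j k * c k) = r i * r j * (H i k * H j k)" if "k < N" for k
  proof -
    have "c k * c k = 1" using c that by auto
    then show ?thesis by (metis (no_types, lifting) mult.assoc mult.commute mult.left_commute mult_1_right)
  qed
  then have "(\<Sum>k<N. r i * H i k * c k * (r j * H j k * c k)) = (\<Sum>k<N. r i * r j * (H i k * H j k))"
    by (intro sum.cong) auto
  also have "\<dots> = r i * r j * (\<Sum>k<N. H i k * H j k)"
    by (simp add: sum_distrib_left)
  also have "\<dots> = 0"
    using H \<open>i < N\<close> \<open>j < N\<close> \<open>i \<noteq> j\<close> unfolding hadamard_matrix_def by simp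
  finally show "(\<Sum>k<N. r i * H i k * c k * (r j * H j k * c k)) = 0" .
qed

lemma hadamard_core_of_normalized:
  assumes H: "hadamard_matrix (n + 1) H"
    and row: "\<forall>k<n + 1. H 0 k = 1" and col: "\<forall>k<n + 1. H k 0 = 1"
  shows "hadamard_core n (\<lambda>i j. H (Suc i) (Suc j))"
proof -
  have sign: "\<forall>i<n + 1. \<forall>j<n + 1. H i j = 1 \<or> H i j = -1"
    and orth: "\<And>i j. i < n + 1 \<Longrightarrow> j < n + 1 \<Longrightarrow> i \<noteq> j \<Longrightarrow> (\<Sum>k<n + 1. H i k * H j k) = 0"
    using H unfolding hadamard_matrix_def by blast+
  have split: "(\<Sum>k<n + 1. H i k * H j k) = H i 0 * H j 0 + (\<Sum>k<n. H i (Suc k) * H j (Suc k))" for i j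
    by (simp add: sum.lessThan_Suc_shift del: sum.lessThan_Suc)
  show ?thesis
    unfolding hadamard_core_def
  proof (intro conjI allI impI)
    fix i j assume "i < n" "j < n"
    then show "H (Suc i) (Suc j) = 1 \<or> H (Suc i) (Suc j) = -1" using sign by simp
  next
    fix i j assume "i < n" "j < n" "i \<noteq> j"
    then have "(\<Sum>k<n + 1. H (Suc i) k * H (Suc j) k) = 0" by (intro orth) auto
    then show "(\<Sum>k<n. H (Suc i) (Suc k) * H (Suc j) (Suc k)) = -1"
      using col \<open>i < n\<close> \<open>j < n\<close> unfolding split by simp
  next
    fix i assume "i < n"
    then have "(\<Sum>k<n + 1. H (Suc i) k * H 0 k) = 0" by (intro orth) auto
    moreover have "(\<Sum>k<n. H (Suc i) (Suc k) * H 0 (Suc k)) = (\<Sum>k<n. H (Suc i) (Suc k))"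
      using row by (intro sum.cong) auto
    ultimately show "(\<Sum>k<n. H (Suc i) (Suc k)) = -1"
      using row col \<open>i < n\<close> unfolding split by simp
  qed
qed

lemma hadamard_core_exists:
  assumes "hadamard_exists (n + 1)"
  shows "\<exists>C. hadamard_core n C"
proof -
  obtain H where H: "hadamard_matrix (n + 1) H"
    using assms unfolding hadamard_exists_def by blast
  have sign: "H i j = 1 \<or> H i j = -1" if "i < n + 1" "j < n + 1" for i j
    using H that unfolding hadamard_matrix_def by blast
  have sq: "H i j * H i j = 1" if "i < n + 1" "j < n + 1" for i j
    using sign[OF that] by auto
  define H' where "H' i j = H i 0 * H i j * (H 0 j * H 0 0)" for i j
  have "hadamard_matrix (n + 1) H'"
    unfolding H'_def
  proof (intro hadamard_matrix_sign_change[OF H] allI impI)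
    fix i assume "i < n + 1"
    then show "H i 0 = 1 \<or> H i 0 = -1" by (intro sign) auto
  next
    fix j assume "j < n + 1"
    then have "H 0 j = 1 \<or> H 0 j = -1" "H 0 0 = 1 \<or> H 0 0 = -1" by (intro sign; simp)+
    then show "H 0 j * H 0 0 = 1 \<or> H 0 j * H 0 0 = -1" by auto
  qed
  moreover have "H' 0 k = 1" "H' k 0 = 1" if "k < n + 1" for k
  proof -
    have "H' 0 k = (H 0 0 * H 0 0) * (H 0 k * H 0 k)" "H' k 0 = (H k 0 * H k 0) * (H 0 0 * H 0 0)"
      unfolding H'_def by (simp_all add: mult_ac)
    then show "H' 0 k = 1" "H' k 0 = 1" using sq that by simp_all
  qed
  ultimately show ?thesis by (blast intro: hadamard_core_of_normalized)
qed

lemma hadamard_exists_of_core: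
  assumes C: "hadamard_core n C"
  shows "hadamard_exists (n + 1)"
proof -
  have sign: "C i j = 1 \<or> C i j = -1" if "i < n" "j < n" for i j
    using C that unfolding hadamard_core_def by blast
  have gram: "(\<Sum>k<n. C i k * C j k) = -1" if "i < n" "j < n" "i \<noteq> j" for i j
    using C that unfolding hadamard_core_def by blast
  have row_sum: "(\<Sum>k<n. C i k) = -1" if "i < n" for i
    using C that unfolding hadamard_core_def by blast
  define H where "H i j = (if i = 0 \<or> j = 0 then 1 else C (i - 1) (j - 1))" for i j
  have split: "(\<Sum>k<n + 1. H i k * H j k) = H i 0 * H j 0 + (\<Sum>k<n. H i (Suc k) * H j (Suc k))" for i j
    by (simp add: sum.lessThan_Suc_shift del: sum.lessThan_Suc)
  have orth: "(\<Sum>k<n + 1. H i k * H j k) = 0" if ij: "i < j" "j < n + 1" for i j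
  proof -
    obtain j' where j: "j = Suc j'" "j' < n"
      using ij by (cases j) auto
    show ?thesis
    proof (cases i)
      case 0
      then show ?thesis using row_sum[OF j(2)] unfolding split j by (simp add: H_def)
    next
      case (Suc i')
      then have "i' < n" "i' \<noteq> j'" using ij j by auto
      then show ?thesis using gram[of i' j'] j unfolding split Suc by (simp add: H_def)
    qed
  qed
  have "hadamard_matrix (n + 1) H"
    unfolding hadamard_matrix_def
  proof (intro conjI allI impI)
    fix i j assume "i < n + 1" "j < n + 1"
    then show "H i j = 1 \<or> H i j = -1"
      unfolding H_def using sign[of "i - 1" "j - 1"] by auto
  next
    fix i j assume "i < n + 1" "j < n + 1" "i \<noteq> j"
    then show "(\<Sum>k<n + 1. H i k * H j k) = 0"
      using orth[of i j] orth[of j i] by (cases "i < j") (auto simp: mult.commute)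
  qed
  then show ?thesis unfolding hadamard_exists_def by blast
qed

section \<open>Flat orthogonal matrices\<close>

text \<open>a = core_scale n and b = core_shift n solve a^2 (n + 1) = 1 and n b^2 - 2 a b - a^2 = 0,
  the two conditions for a C + b J to be orthogonal when C is a Hadamard core.\<close>

definition core_scale :: "nat \<Rightarrow> real" where
  "core_scale n = 1 / sqrt (real n + 1)"

definition core_shift :: "nat \<Rightarrow> real" where
  "core_shift n = (1 + core_scale n) / real n"

definition flattened_core :: "nat \<Rightarrow> (nat \<Rightarrow> nat \<Rightarrow> int) \<Rightarrow> nat \<Rightarrow> nat \<Rightarrow> real" where
  "flattened_core n C i j = core_scale n * of_int (C i j) + core_shift n"

text \<open>The entries of a C + b J are a + b and b - a.\<close>

definition flatness_defect :: "nat \<Rightarrow> real" where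
  "flatness_defect n = max \<bar>sqrt n * (core_scale n + core_shift n) - 1\<bar>
                           \<bar>sqrt n * \<bar>core_shift n - core_scale n\<bar> - 1\<bar>"

lemma flatness_defect_nonneg: "flatness_defect n \<ge> 0"
  by (simp add: flatness_defect_def)

lemma flatness_defect_tendsto_0: "flatness_defect \<longlonglongrightarrow> 0"
  unfolding flatness_defect_def core_shift_def core_scale_def by real_asymp

lemma core_scale_shift_equations:
  assumes "n > 0"
  shows "core_scale n ^ 2 * (real n + 1) = 1"
    and "real n * core_shift n ^ 2 - 2 * core_scale n * core_shift n - core_scale n ^ 2 = 0"
proof -
  define a where "a = core_scale n"
  have a2: "a ^ 2 * (real n + 1) = 1"
    unfolding a_def core_scale_def by (simp add: power_divide)
  then show "core_scale n ^ 2 * (real n + 1) = 1" unfolding a_def .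
  have "real n * core_shift n ^ 2 - 2 * a * core_shift n - a ^ 2 = (1 - a ^ 2 * (real n + 1)) / real n"
    unfolding a_def[symmetric] core_shift_def using assms by (simp add: field_simps power2_eq_square)
  then show "real n * core_shift n ^ 2 - 2 * core_scale n * core_shift n - core_scale n ^ 2 = 0"
    using a2 unfolding a_def by simp
qed

lemma orthogonal_mat_flattened_core:
  assumes "n > 0" and C: "hadamard_core n C"
  shows "orthogonal_mat n (flattened_core n C)"
  unfolding orthogonal_mat_def
proof (intro allI impI)
  fix i j assume ij: "i < n" "j < n"
  define a b where "a = core_scale n" and "b = core_shift n"
  have row_sum: "(\<Sum>k<n. real_of_int (C l k)) = -1" if "l < n" for l
  proof -
    have "(\<Sum>k<n. C l k) = -1" using C that unfolding hadamard_core_def by blast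
    then show ?thesis by (simp flip: of_int_sum)
  qed
  have "(\<Sum>k<n. C i k * C j k) = (if i = j then int n else -1)"
  proof (cases "i = j")
    case True
    then show ?thesis
      using C ij unfolding hadamard_core_def by (simp add: sum_products_sign_vector)
  qed (use C ij in \<open>simp add: hadamard_core_def\<close>)
  then have gram: "(\<Sum>k<n. real_of_int (C i k) * real_of_int (C j k)) = (if i = j then real n else -1)"
    by (simp flip: of_int_sum of_int_mult)
  have "(\<Sum>k<n. flattened_core n C i k * flattened_core n C j k) =
      a ^ 2 * (\<Sum>k<n. real_of_int (C i k) * real_of_int (C j k))
      + a * b * (\<Sum>k<n. real_of_int (C i k)) + a * b * (\<Sum>k<n. real_of_int (C j k)) + real n * b ^ 2"
    unfolding flattened_core_def a_def b_def
    by (simp add: algebra_simps power2_eq_square sum.distrib sum_distrib_left)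
  also have "\<dots> = (if i = j then a ^ 2 * (real n + 1) else 0) + (real n * b ^ 2 - 2 * a * b - a ^ 2)"
    unfolding gram row_sum[OF ij(1)] row_sum[OF ij(2)] by (simp add: algebra_simps)
  also have "\<dots> = (if i = j then 1 else 0)"
    using core_scale_shift_equations[OF \<open>n > 0\<close>] unfolding a_def b_def by simp
  finally show "(\<Sum>k<n. flattened_core n C i k * flattened_core n C j k) = (if i = j then 1 else 0)" .
qed

lemma flat_entriesI:
  assumes "n > 0" and "\<And>i j. i < n \<Longrightarrow> j < n \<Longrightarrow> \<bar>sqrt n * \<bar>M i j\<bar> - 1\<bar> \<le> d"
  shows "flat_entries d n M"
  unfolding flat_entries_def
proof (intro allI impI)
  fix i j assume "i < n" "j < n"
  have s: "sqrt n > 0" using \<open>n > 0\<close> by simp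
  have "1 - d \<le> sqrt n * \<bar>M i j\<bar>" "sqrt n * \<bar>M i j\<bar> \<le> 1 + d"
    using assms(2)[OF \<open>i < n\<close> \<open>j < n\<close>] by linarith+
  with s show "(1 - d) * (1 / sqrt n) \<le> \<bar>M i j\<bar> \<and> \<bar>M i j\<bar> \<le> (1 + d) * (1 / sqrt n)"
    by (simp add: field_simps)
qed

lemma flat_entries_flattened_core:
  assumes "n > 0" and C: "hadamard_core n C"
  shows "flat_entries (flatness_defect n) n (flattened_core n C)"
proof (rule flat_entriesI[OF \<open>n > 0\<close>])
  fix i j assume "i < n" "j < n"
  then have "C i j = 1 \<or> C i j = -1" using C unfolding hadamard_core_def by auto
  moreover have "core_scale n > 0" "core_shift n > 0"
    using \<open>n > 0\<close> unfolding core_shift_def core_scale_def by (auto intro!: divide_pos_pos add_pos_pos)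
  ultimately show "\<bar>sqrt n * \<bar>flattened_core n C i j\<bar> - 1\<bar> \<le> flatness_defect n"
    unfolding flattened_core_def flatness_defect_def by (auto simp: abs_if algebra_simps)
qed

lemma circulant_mat_flattened_core:
  assumes "circulant_mat n (\<lambda>i j. real_of_int (C i j))"
  shows "circulant_mat n (flattened_core n C)"
  using assms unfolding circulant_mat_def flattened_core_def by metis

section \<open>Paley's construction\<close>

lemma sum_delta_products:
  fixes a b :: "nat \<Rightarrow> 'a :: comm_ring_1"
  assumes "i < n" "j < n" "i \<noteq> j"
  shows "(\<Sum>k<n. (a k - (if i = k then 1 else 0)) * (b k - (if j = k then 1 else 0)))
       = (\<Sum>k<n. a k * b k) - b i - a j"
proof -
  have "(\<Sum>k<n. (a k - (if i = k then 1 else 0)) * (b k - (if j = k then 1 else 0)))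
      = (\<Sum>k<n. a k * b k - (if i = k then b k else 0) - (if j = k then a k else 0))"
    using assms(3) by (intro sum.cong) (auto simp: algebra_simps)
  also have "\<dots> = (\<Sum>k<n. a k * b k) - b i - a j"
    using assms(1,2) by (simp add: sum_subtractf sum.delta')
  finally show ?thesis .
qed

lemma (in field) mult_inv_mult_inv:
  assumes "e \<in> carrier R" "e \<noteq> \<zero>" "w \<in> carrier R" "w \<noteq> \<zero>"
  shows "e \<otimes> inv (e \<otimes> inv w) = w"
proof -
  have units: "e \<in> Units R" "w \<in> Units R"
    using assms field_Units by auto
  have "e \<otimes> inv w \<otimes> (w \<otimes> inv e) = \<one>"
    using units by (metis Units_closed Units_l_inv Units_r_inv_ex comm_inv_char m_assoc m_closed r_one)
  then have "inv (e \<otimes> inv w) = w \<otimes> inv e"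
    using units by (intro comm_inv_char) auto
  then show ?thesis
    using units by (metis Units_closed Units_inv_closed Units_r_inv m_lcomm r_one)
qed

lemma (in field) inv_nonzero:
  assumes "x \<in> carrier R" "x \<noteq> \<zero>"
  shows "inv x \<in> carrier R - {\<zero>}"
  using Units_inv_Units[of x] assms field_Units by simp

locale paley_field = field R for R (structure) +
  assumes order_mod_4: "order R mod 4 = 3"
begin

lemma finite_carrier: "finite (carrier R)"
  using order_mod_4 card.infinite unfolding order_def by fastforce

text \<open>Characteristic 2 is impossible: the additive order of \<one> divides the odd number order R.\<close>

lemma minus_one_ne_one: "\<ominus> \<one> \<noteq> \<one>"
proof
  assume "\<ominus> \<one> = \<one>"
  then have "\<one> \<oplus> \<one> = \<zero>"
    by (metis one_closed r_neg)
  then have two: "[(2::nat)] \<cdot> \<one> = \<zero>"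
    by (simp add: numeral_2_eq_2)
  obtain m where m: "order R = 2 * m + 1"
    using order_mod_4 by (intro that[of "order R div 2"]) presburger
  have "[order R] \<cdot> \<one> = [m] \<cdot> ([(2::nat)] \<cdot> \<one>) \<oplus> \<one>"
    unfolding m by (simp add: add.nat_pow_pow mult.commute)
  also have "\<dots> = \<one>"
    using two by simp
  finally have "[order R] \<cdot> \<one> = \<one>" .
  moreover have "[order (add_monoid R)] \<cdot> \<one> = \<zero>"
    by (rule add.pow_order_eq_1) simp
  ultimately show False
    by (simp add: order_def)
qed

text \<open>The quadratic character via Euler's criterion. Only multiplicativity and \<chi>(-1) = -1
  (the exponent (order R - 1)/2 is odd) are used, never the connection with squares.\<close>

definition quadratic_char :: "'a \<Rightarrow> int" where
  "quadratic_char x =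
     (if x = \<zero> then 0 else if x [^] ((order R - 1) div 2) = \<one> then 1 else -1)"

lemma pow_order_minus_one:
  assumes "x \<in> carrier R" "x \<noteq> \<zero>"
  shows "x [^] (order R - 1) = \<one>"
proof -
  interpret G: group "Multiplicative_Group.mult_of R" by (rule field_mult_group)
  have "x [^]\<^bsub>Multiplicative_Group.mult_of R\<^esub> order (Multiplicative_Group.mult_of R)
      = \<one>\<^bsub>Multiplicative_Group.mult_of R\<^esub>"
    using assms by (intro G.pow_order_eq_1) simp
  then show ?thesis using order_mult_of[OF finite_carrier] by (simp add: Multiplicative_Group.nat_pow_mult_of)
qed

lemma pow_half_order:
  assumes "x \<in> carrier R" "x \<noteq> \<zero>"
  shows "x [^] ((order R - 1) div 2) = \<one> \<or> x [^] ((order R - 1) div 2) = \<ominus> \<one>"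
proof (rule square_eq_one)
  have "(order R - 1) div 2 + (order R - 1) div 2 = order R - 1"
    using order_mod_4 by presburger
  then show "x [^] ((order R - 1) div 2) \<otimes> x [^] ((order R - 1) div 2) = \<one>"
    using assms pow_order_minus_one by (simp add: nat_pow_mult)
qed (use assms in simp)

lemma quadratic_char_zero [simp]: "quadratic_char \<zero> = 0"
  by (simp add: quadratic_char_def)

lemma quadratic_char_one [simp]: "quadratic_char \<one> = 1"
  by (simp add: quadratic_char_def)

lemma quadratic_char_sign:
  assumes "x \<in> carrier R" "x \<noteq> \<zero>"
  shows "quadratic_char x = 1 \<or> quadratic_char x = -1"
  using assms by (simp add: quadratic_char_def)

lemma quadratic_char_mult:
  assumes "x \<in> carrier R" "y \<in> carrier R"
  shows "quadratic_char (x \<otimes> y) = quadratic_char x * quadratic_char y"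
proof (cases "x = \<zero> \<or> y = \<zero>")
  case True
  then show ?thesis using assms by auto
next
  case False
  then have "x \<otimes> y \<noteq> \<zero>" using assms integral by blast
  moreover have "(x \<otimes> y) [^] ((order R - 1) div 2) = x [^] ((order R - 1) div 2) \<otimes> y [^] ((order R - 1) div 2)"
    using assms by (simp add: nat_pow_distrib)
  moreover have "\<ominus> \<one> \<otimes> \<ominus> \<one> = \<one>"
    by (simp add: l_minus r_minus)
  ultimately show ?thesis
    using pow_half_order[of x] pow_half_order[of y] False assms minus_one_ne_one
    unfolding quadratic_char_def by auto
qed

lemma quadratic_char_minus_one: "quadratic_char (\<ominus> \<one>) = -1"
proof -
  obtain k where k: "(order R - 1) div 2 = Suc (2 * k)"
    using order_mod_4 by (intro that[of "(order R - 3) div 4"]) presburger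
  have "(\<ominus> \<one>) [^] (2::nat) = \<one>"
    by (simp add: numeral_2_eq_2 l_minus r_minus)
  then have "(\<ominus> \<one>) [^] (2 * k) = \<one>"
    by (simp add: nat_pow_pow[symmetric])
  then have "(\<ominus> \<one>) [^] ((order R - 1) div 2) = \<ominus> \<one>"
    unfolding k by simp
  moreover have "\<ominus> \<one> \<noteq> \<zero>"
    using minus_one_ne_one by (metis add.inv_closed minus_minus minus_zero one_closed zero_not_one)
  ultimately show ?thesis
    using minus_one_ne_one unfolding quadratic_char_def by auto
qed

lemma quadratic_char_uminus:
  assumes "x \<in> carrier R"
  shows "quadratic_char (\<ominus> x) = - quadratic_char x"
proof -
  have "\<ominus> x = \<ominus> \<one> \<otimes> x" using assms by (simp add: l_minus)
  then show ?thesis using quadratic_char_mult[of "\<ominus> \<one>" x] quadratic_char_minus_one assms by simp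
qed

lemma quadratic_char_inv:
  assumes "x \<in> carrier R" "x \<noteq> \<zero>"
  shows "quadratic_char (inv x) = quadratic_char x"
proof -
  have "x \<in> Units R" using assms field_Units by auto
  then have "quadratic_char x * quadratic_char (inv x) = 1"
    using quadratic_char_mult[of x "inv x"] assms by simp
  then show ?thesis using quadratic_char_sign[OF assms] by auto
qed

lemma sum_quadratic_char: "(\<Sum>x\<in>carrier R. quadratic_char x) = 0"
proof -
  have "(\<Sum>x\<in>carrier R. quadratic_char x) = (\<Sum>x\<in>carrier R. quadratic_char (\<ominus> x))"
    by (rule sum.reindex_bij_witness[where i = "\<lambda>x. \<ominus> x" and j = "\<lambda>x. \<ominus> x"]) auto
  also have "\<dots> = - (\<Sum>x\<in>carrier R. quadratic_char x)"
    by (simp add: quadratic_char_uminus sum_negf)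
  finally show ?thesis by simp
qed

lemma sum_translate:
  assumes "a \<in> carrier R"
  shows "(\<Sum>y\<in>carrier R. f (y \<ominus> a)) = (\<Sum>u\<in>carrier R. f u)"
  by (rule sum.reindex_bij_witness[where i = "\<lambda>u. u \<oplus> a" and j = "\<lambda>y. y \<ominus> a"])
     (use assms in \<open>auto simp: a_minus_def a_assoc l_neg r_neg\<close>)

lemma bij_betw_one_plus_div:
  assumes "e \<in> carrier R" "e \<noteq> \<zero>"
  shows "bij_betw (\<lambda>u. \<one> \<oplus> e \<otimes> inv u) (carrier R - {\<zero>}) (carrier R - {\<one>})"
proof (rule bij_betw_byWitness[where f' = "\<lambda>v. e \<otimes> inv (v \<ominus> \<one>)"])
  show "\<forall>u\<in>carrier R - {\<zero>}. e \<otimes> inv (\<one> \<oplus> e \<otimes> inv u \<ominus> \<one>) = u"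
  proof
    fix u assume u: "u \<in> carrier R - {\<zero>}"
    then have "e \<otimes> inv u \<in> carrier R"
      using assms inv_nonzero[of u] by simp
    then have "\<one> \<oplus> e \<otimes> inv u \<ominus> \<one> = e \<otimes> inv u" by algebra
    then show "e \<otimes> inv (\<one> \<oplus> e \<otimes> inv u \<ominus> \<one>) = u"
      using u assms mult_inv_mult_inv by auto
  qed
  show "\<forall>v\<in>carrier R - {\<one>}. \<one> \<oplus> e \<otimes> inv (e \<otimes> inv (v \<ominus> \<one>)) = v"
  proof
    fix v assume v: "v \<in> carrier R - {\<one>}"
    then have "v \<ominus> \<one> \<noteq> \<zero>" by (simp add: r_right_minus_eq)
    then have "e \<otimes> inv (e \<otimes> inv (v \<ominus> \<one>)) = v \<ominus> \<one>"
      using v assms by (intro mult_inv_mult_inv) auto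
    then show "\<one> \<oplus> e \<otimes> inv (e \<otimes> inv (v \<ominus> \<one>)) = v"
      using v by (simp add: a_minus_def add.m_lcomm r_neg)
  qed
  show "(\<lambda>u. \<one> \<oplus> e \<otimes> inv u) ` (carrier R - {\<zero>}) \<subseteq> carrier R - {\<one>}"
  proof safe
    fix u assume u: "u \<in> carrier R" "u \<noteq> \<zero>"
    then have w: "e \<otimes> inv u \<in> carrier R" "e \<otimes> inv u \<noteq> \<zero>"
      using assms inv_nonzero[of u] by (simp_all add: integral_iff)
    then show "\<one> \<oplus> e \<otimes> inv u \<in> carrier R" by simp
    assume "\<one> \<oplus> e \<otimes> inv u = \<one>"
    moreover have "e \<otimes> inv u = \<one> \<oplus> e \<otimes> inv u \<ominus> \<one>"
      using w(1) by algebra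
    ultimately show False
      using w(2) by (simp add: r_neg a_minus_def)
  qed
  show "(\<lambda>v. e \<otimes> inv (v \<ominus> \<one>)) ` (carrier R - {\<one>}) \<subseteq> carrier R - {\<zero>}"
  proof safe
    fix v assume "v \<in> carrier R" "v \<noteq> \<one>"
    then have "inv (v \<ominus> \<one>) \<in> carrier R - {\<zero>}"
      by (intro inv_nonzero) (auto simp: r_right_minus_eq)
    then show "e \<otimes> inv (v \<ominus> \<one>) \<in> carrier R" "e \<otimes> inv (v \<ominus> \<one>) = \<zero> \<Longrightarrow> False"
      using assms by (auto simp: integral_iff)
  qed
qed

text \<open>For u \<noteq> 0, \<chi>(u) \<chi>(u + e) = \<chi>(1 + e/u), and u \<mapsto> 1 + e/u is a bijection from the
  nonzero elements onto the elements different from \<one>.\<close>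

lemma jacobsthal_sum:
  assumes "e \<in> carrier R" "e \<noteq> \<zero>"
  shows "(\<Sum>u\<in>carrier R. quadratic_char u * quadratic_char (u \<oplus> e)) = -1"
proof -
  have "(\<Sum>u\<in>carrier R. quadratic_char u * quadratic_char (u \<oplus> e))
      = (\<Sum>u\<in>carrier R - {\<zero>}. quadratic_char u * quadratic_char (u \<oplus> e))"
    using finite_carrier by (simp add: sum.remove[of _ \<zero>])
  also have "\<dots> = (\<Sum>u\<in>carrier R - {\<zero>}. quadratic_char (\<one> \<oplus> e \<otimes> inv u))"
  proof (rule sum.cong[OF refl])
    fix u assume u: "u \<in> carrier R - {\<zero>}"
    then have unit: "u \<in> Units R" using field_Units by auto
    then have "inv u \<otimes> (u \<oplus> e) = inv u \<otimes> u \<oplus> inv u \<otimes> e"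
      using assms by (intro r_distr) auto
    also have "\<dots> = \<one> \<oplus> e \<otimes> inv u"
      using unit assms by (simp add: m_comm[of "inv u" e])
    finally have "inv u \<otimes> (u \<oplus> e) = \<one> \<oplus> e \<otimes> inv u" .
    then have "quadratic_char (\<one> \<oplus> e \<otimes> inv u) = quadratic_char (inv u) * quadratic_char (u \<oplus> e)"
      using quadratic_char_mult[of "inv u" "u \<oplus> e"] unit Units_closed[OF unit] assms by simp
    then show "quadratic_char u * quadratic_char (u \<oplus> e) = quadratic_char (\<one> \<oplus> e \<otimes> inv u)"
      using quadratic_char_inv u by simp
  qed
  also have "\<dots> = (\<Sum>v\<in>carrier R - {\<one>}. quadratic_char v)"
    by (rule sum.reindex_bij_betw[OF bij_betw_one_plus_div[OF assms]])
  also have "\<dots> = -1"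
    using sum_quadratic_char finite_carrier by (simp add: sum_diff1)
  finally show ?thesis .
qed

lemma sum_quadratic_char_translates:
  assumes "x \<in> carrier R" "y \<in> carrier R" "x \<noteq> y"
  shows "(\<Sum>z\<in>carrier R. quadratic_char (z \<ominus> x) * quadratic_char (z \<ominus> y)) = -1"
proof -
  have "(\<Sum>z\<in>carrier R. quadratic_char (z \<ominus> x) * quadratic_char (z \<ominus> y))
      = (\<Sum>z\<in>carrier R. quadratic_char (z \<ominus> x) * quadratic_char ((z \<ominus> x) \<oplus> (x \<ominus> y)))"
  proof (rule sum.cong[OF refl])
    fix z assume "z \<in> carrier R"
    then have "z \<ominus> y = (z \<ominus> x) \<oplus> (x \<ominus> y)" using assms by algebra
    then show "quadratic_char (z \<ominus> x) * quadratic_char (z \<ominus> y)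
        = quadratic_char (z \<ominus> x) * quadratic_char ((z \<ominus> x) \<oplus> (x \<ominus> y))" by simp
  qed
  also have "\<dots> = (\<Sum>u\<in>carrier R. quadratic_char u * quadratic_char (u \<oplus> (x \<ominus> y)))"
    by (rule sum_translate[OF assms(1)])
  also have "\<dots> = -1"
    using assms by (intro jacobsthal_sum) (auto simp: r_right_minus_eq)
  finally show ?thesis .
qed

definition paley_matrix :: "(nat \<Rightarrow> 'a) \<Rightarrow> nat \<Rightarrow> nat \<Rightarrow> int" where
  "paley_matrix e i j = quadratic_char (e j \<ominus> e i) - (if i = j then 1 else 0)"

context
  fixes e :: "nat \<Rightarrow> 'a"
  assumes e: "bij_betw e {..<order R} (carrier R)"
begin

lemma paley_index_closed: "k < order R \<Longrightarrow> e k \<in> carrier R"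
  using e bij_betw_apply by fastforce

lemma paley_index_diff_eq_zero:
  "k < order R \<Longrightarrow> l < order R \<Longrightarrow> e l \<ominus> e k = \<zero> \<longleftrightarrow> k = l"
  using e paley_index_closed unfolding bij_betw_def inj_on_def by (auto simp: r_right_minus_eq)

lemma sum_paley_index: "(\<Sum>k<order R. f (e k)) = (\<Sum>z\<in>carrier R. f z)"
  using sum.reindex_bij_betw[OF e] by blast

lemma paley_matrix_sign:
  assumes "i < order R" "j < order R"
  shows "paley_matrix e i j = 1 \<or> paley_matrix e i j = -1"
proof (cases "i = j")
  case False
  then show ?thesis
    using assms quadratic_char_sign[of "e j \<ominus> e i"] paley_index_closed paley_index_diff_eq_zero
    unfolding paley_matrix_def by auto
qed (use assms paley_index_closed in \<open>simp add: paley_matrix_def a_minus_def r_neg\<close>)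

lemma paley_matrix_row_products:
  assumes ij: "i < order R" "j < order R" "i \<noteq> j"
  shows "(\<Sum>k<order R. paley_matrix e i k * paley_matrix e j k) = -1"
proof -
  have "(\<Sum>k<order R. paley_matrix e i k * paley_matrix e j k)
      = (\<Sum>z\<in>carrier R. quadratic_char (z \<ominus> e i) * quadratic_char (z \<ominus> e j))
        - quadratic_char (e i \<ominus> e j) - quadratic_char (e j \<ominus> e i)"
    using ij unfolding paley_matrix_def
    by (simp add: sum_delta_products sum_paley_index[of "\<lambda>z. quadratic_char (z \<ominus> e i) * quadratic_char (z \<ominus> e j)"])
  also have "\<dots> = -1"
  proof -
    have "e j \<ominus> e i = \<ominus> (e i \<ominus> e j)"
      using ij paley_index_closed by algebra
    then show ?thesis
      using ij paley_index_closed paley_index_diff_eq_zero[of j i]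
        sum_quadratic_char_translates[of "e i" "e j"] quadratic_char_uminus[of "e i \<ominus> e j"]
      by simp
  qed
  finally show ?thesis .
qed

lemma paley_matrix_row_sum:
  assumes "i < order R"
  shows "(\<Sum>k<order R. paley_matrix e i k) = -1"
proof -
  have "(\<Sum>k<order R. paley_matrix e i k) = (\<Sum>z\<in>carrier R. quadratic_char (z \<ominus> e i)) - 1"
    using assms unfolding paley_matrix_def
    by (simp add: sum_subtractf sum_paley_index[of "\<lambda>z. quadratic_char (z \<ominus> e i)"])
  also have "\<dots> = -1"
    using sum_translate[OF paley_index_closed[OF assms], of quadratic_char] sum_quadratic_char by simp
  finally show ?thesis .
qed

lemma hadamard_core_paley_matrix: "hadamard_core (order R) (paley_matrix e)"
  unfolding hadamard_core_def
  using paley_matrix_sign paley_matrix_row_products paley_matrix_row_sum by blast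

end

end

text \<open>Indexing \<int>/p by 0, ..., p - 1, the Paley matrix depends only on j - i mod p.\<close>

lemma hadamard_core_prime_circulant:
  assumes p: "prime p" "p mod 4 = 3"
  shows "\<exists>C. hadamard_core p C \<and> circulant_mat p (\<lambda>i j. real_of_int (C i j))"
proof -
  define Zp where "Zp = residue_ring (int p)"
  interpret Zp: residues_prime p Zp
    unfolding Zp_def by unfold_locales (use p in auto)
  have order: "order Zp = p"
    by (simp add: order_def Zp.res_carrier_eq)
  interpret paley_field Zp
    using order p by unfold_locales simp
  define C where "C = paley_matrix int"
  have "bij_betw int {..<p} {0..int p - 1}"
    by (rule bij_betw_byWitness[where f' = nat]) auto
  then have "hadamard_core p C"
    using hadamard_core_paley_matrix[of int] unfolding C_def order Zp.res_carrier_eq by simp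
  moreover have "circulant_mat p (\<lambda>i j. real_of_int (C i j))"
    unfolding circulant_mat_def
  proof (intro allI impI)
    fix i j i' j'
    assume ij: "i < p" "j < p" "i' < p" "j' < p" and eq: "(int j - int i) mod int p = (int j' - int i') mod int p"
    have diff: "int b \<ominus>\<^bsub>Zp\<^esub> int a = (int b - int a) mod int p" for a b
      unfolding a_minus_def Zp.res_add_eq Zp.res_neg_eq by (simp add: mod_add_right_eq)
    have diag: "a = b \<longleftrightarrow> (int b - int a) mod int p = 0" if "a < p" "b < p" for a b
    proof -
      have "(int b - int a) mod int p = 0 \<longleftrightarrow> int b mod int p = int a mod int p"
        by (simp add: mod_eq_dvd_iff mod_eq_0_iff_dvd)
      then show ?thesis using that by (auto simp flip: of_nat_mod)
    qed
    show "real_of_int (C i j) = real_of_int (C i' j')"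
      unfolding C_def paley_matrix_def diff using eq diag[of i j] diag[of i' j'] ij by simp
  qed
  ultimately show ?thesis by blast
qed

section \<open>The Frobenius map\<close>

context cring
begin

lemma binomial_sum_mult_left:
  assumes x: "x \<in> carrier R" and y: "y \<in> carrier R"
  shows "(\<Oplus>k\<in>{..n}. [(n choose k)] \<cdot> (x [^] k \<otimes> y [^] (n - k))) \<otimes> x
       = (\<Oplus>k\<in>{..n}. [(n choose k)] \<cdot> (x [^] Suc k \<otimes> y [^] (n - k)))"
proof -
  have "(\<Oplus>k\<in>{..n}. [(n choose k)] \<cdot> (x [^] k \<otimes> y [^] (n - k))) \<otimes> x
      = (\<Oplus>k\<in>{..n}. [(n choose k)] \<cdot> (x [^] k \<otimes> y [^] (n - k)) \<otimes> x)"
    using x y by (intro finsum_ldistr) auto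
  also have "\<dots> = (\<Oplus>k\<in>{..n}. [(n choose k)] \<cdot> (x [^] Suc k \<otimes> y [^] (n - k)))"
  proof (intro finsum_cong')
    fix k
    have "[(n choose k)] \<cdot> (x [^] k \<otimes> y [^] (n - k)) \<otimes> x = [(n choose k)] \<cdot> (x [^] k \<otimes> y [^] (n - k) \<otimes> x)"
      using x y by (intro add_pow_ldistr) auto
    also have "x [^] k \<otimes> y [^] (n - k) \<otimes> x = x [^] Suc k \<otimes> y [^] (n - k)"
      using x y by (simp add: m_ac)
    finally show "[(n choose k)] \<cdot> (x [^] k \<otimes> y [^] (n - k)) \<otimes> x = [(n choose k)] \<cdot> (x [^] Suc k \<otimes> y [^] (n - k))" .
  qed (use x y in auto)
  finally show ?thesis .
qed

lemma binomial_sum_mult_right: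
  assumes x: "x \<in> carrier R" and y: "y \<in> carrier R"
  shows "(\<Oplus>k\<in>{..n}. [(n choose k)] \<cdot> (x [^] k \<otimes> y [^] (n - k))) \<otimes> y
       = (\<Oplus>k\<in>{..n}. [(n choose Suc k)] \<cdot> (x [^] Suc k \<otimes> y [^] (n - k))) \<oplus> y [^] Suc n"
proof -
  define g where "g k = [(n choose k)] \<cdot> (x [^] k \<otimes> y [^] (Suc n - k))" for k
  have g_closed: "g \<in> A \<rightarrow> carrier R" for A
    unfolding g_def using x y by auto
  have "(\<Oplus>k\<in>{..n}. [(n choose k)] \<cdot> (x [^] k \<otimes> y [^] (n - k))) \<otimes> y
      = (\<Oplus>k\<in>{..n}. [(n choose k)] \<cdot> (x [^] k \<otimes> y [^] (n - k)) \<otimes> y)"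
    using x y by (intro finsum_ldistr) auto
  also have "\<dots> = (\<Oplus>k\<in>{..n}. g k)"
  proof (intro finsum_cong')
    fix k assume "k \<in> {..n}"
    have "[(n choose k)] \<cdot> (x [^] k \<otimes> y [^] (n - k)) \<otimes> y = [(n choose k)] \<cdot> (x [^] k \<otimes> y [^] (n - k) \<otimes> y)"
      using x y by (intro add_pow_ldistr) auto
    also have "x [^] k \<otimes> y [^] (n - k) \<otimes> y = x [^] k \<otimes> y [^] (Suc n - k)"
      using x y \<open>k \<in> {..n}\<close> by (simp add: m_assoc Suc_diff_le)
    finally show "[(n choose k)] \<cdot> (x [^] k \<otimes> y [^] (n - k)) \<otimes> y = g k" unfolding g_def .
  qed (use g_closed in auto)
  also have "\<dots> = g (Suc n) \<oplus> (\<Oplus>k\<in>{..n}. g k)"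
  proof -
    have "g (Suc n) = \<zero>" by (simp add: g_def binomial_eq_0)
    then show ?thesis using g_closed by (simp add: finsum_closed)
  qed
  also have "\<dots> = (\<Oplus>k\<in>{..Suc n}. g k)"
    using g_closed by simp
  also have "\<dots> = (\<Oplus>k\<in>{..n}. g (Suc k)) \<oplus> g 0"
    using g_closed by (intro finsum_Suc2) auto
  finally show ?thesis
    using y by (simp add: g_def)
qed

lemma binomial_expansion:
  assumes x: "x \<in> carrier R" and y: "y \<in> carrier R"
  shows "(x \<oplus> y) [^] n = (\<Oplus>k\<in>{..n}. [(n choose k)] \<cdot> (x [^] k \<otimes> y [^] (n - k)))"
proof (induction n)
  case 0
  show ?case using x y by simp
next
  case (Suc n)
  define S where "S = (\<Oplus>k\<in>{..n}. [(n choose k)] \<cdot> (x [^] k \<otimes> y [^] (n - k)))"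
  define h where "h k = [(Suc n choose k)] \<cdot> (x [^] k \<otimes> y [^] (Suc n - k))" for k
  have h_closed: "h \<in> A \<rightarrow> carrier R" for A
    unfolding h_def using x y by auto
  have S_closed: "S \<in> carrier R"
    unfolding S_def using x y by (intro finsum_closed) auto
  have "(x \<oplus> y) [^] Suc n = S \<otimes> x \<oplus> S \<otimes> y"
    using Suc.IH x y S_closed by (simp add: S_def r_distr)
  also have "\<dots> = (\<Oplus>k\<in>{..n}. [(n choose k)] \<cdot> (x [^] Suc k \<otimes> y [^] (n - k))
                                \<oplus> [(n choose Suc k)] \<cdot> (x [^] Suc k \<otimes> y [^] (n - k))) \<oplus> y [^] Suc n"
    unfolding S_def binomial_sum_mult_left[OF x y] binomial_sum_mult_right[OF x y]
    using x y by (simp add: finsum_addf a_assoc finsum_closed)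
  also have "\<dots> = (\<Oplus>k\<in>{..n}. h (Suc k)) \<oplus> h 0"
    using x y by (simp add: h_def add.nat_pow_mult)
  also have "\<dots> = (\<Oplus>k\<in>{..Suc n}. h k)"
    using h_closed by (intro finsum_Suc2[symmetric]) auto
  finally show ?case unfolding h_def .
qed

lemma add_pow_char_mult:
  fixes p m :: nat
  assumes "[p] \<cdot> \<one> = \<zero>" "z \<in> carrier R"
  shows "[(p * m)] \<cdot> z = \<zero>"
proof -
  have "([p] \<cdot> \<one>) \<otimes> z = [p] \<cdot> (\<one> \<otimes> z)"
    using assms(2) by (intro add_pow_ldistr) auto
  then have "[p] \<cdot> z = \<zero>"
    using assms by simp
  then have "[m] \<cdot> ([p] \<cdot> z) = \<zero>"
    by simp
  then show ?thesis
    using assms(2) by (simp add: add.nat_pow_pow)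
qed

lemma frobenius_add:
  fixes p :: nat
  assumes x: "x \<in> carrier R" and y: "y \<in> carrier R"
    and p: "prime p" and char: "[p] \<cdot> \<one> = \<zero>"
  shows "(x \<oplus> y) [^] p = x [^] p \<oplus> y [^] p"
proof -
  define f where "f k = [(p choose k)] \<cdot> (x [^] k \<otimes> y [^] (p - k))" for k
  have f_closed: "f \<in> A \<rightarrow> carrier R" for A
    unfolding f_def using x y by auto
  obtain m where m: "p = Suc (Suc m)"
    using prime_ge_2_nat[OF p] by (metis add_2_eq_Suc le_iff_add)
  have inner: "f (Suc k) = \<zero>" if "k \<in> {..m}" for k
  proof -
    have "p dvd (p choose Suc k)"
      using that m p by (intro dvd_choose_prime) auto
    then obtain c where "p choose Suc k = p * c" ..
    then show ?thesis
      unfolding f_def using x y add_pow_char_mult[OF char, of "x [^] Suc k \<otimes> y [^] (p - Suc k)" c]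
      by simp
  qed
  have "(x \<oplus> y) [^] p = (\<Oplus>k\<in>{..Suc (Suc m)}. f k)"
    unfolding f_def using binomial_expansion[OF x y, of p] m by (simp only:)
  also have "\<dots> = f (Suc (Suc m)) \<oplus> (\<Oplus>k\<in>{..Suc m}. f k)"
    using f_closed by simp
  also have "(\<Oplus>k\<in>{..Suc m}. f k) = (\<Oplus>k\<in>{..m}. f (Suc k)) \<oplus> f 0"
    using f_closed by (intro finsum_Suc2) auto
  also have "(\<Oplus>k\<in>{..m}. f (Suc k)) = (\<Oplus>k\<in>{..m}. \<zero>)"
    using inner by (intro finsum_cong') auto
  finally show ?thesis
    using x y m by (simp add: f_def)
qed

lemma frobenius_add_prime_power:
  fixes p :: nat
  assumes x: "x \<in> carrier R" and y: "y \<in> carrier R"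
    and p: "prime p" and char: "[p] \<cdot> \<one> = \<zero>"
  shows "(x \<oplus> y) [^] (p ^ k) = x [^] (p ^ k) \<oplus> y [^] (p ^ k)"
proof (induction k)
  case (Suc k)
  have "(x \<oplus> y) [^] (p ^ Suc k) = ((x \<oplus> y) [^] (p ^ k)) [^] p"
    using x y by (simp add: nat_pow_pow mult.commute)
  also have "\<dots> = (x [^] (p ^ k)) [^] p \<oplus> (y [^] (p ^ k)) [^] p"
    unfolding Suc.IH using x y p char by (intro frobenius_add) auto
  also have "\<dots> = x [^] (p ^ Suc k) \<oplus> y [^] (p ^ Suc k)"
    using x y by (simp add: nat_pow_pow mult.commute)
  finally show ?case .
qed (use x y in simp)

end

section \<open>Finite fields of prime power order\<close>

text \<open>pow_diff_cofactor R x y n = (\<Sum>i<n. x^i y^(n - 1 - i)), the cofactor of x - y in x^n - y^n.\<close>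

primrec pow_diff_cofactor :: "('a, 'b) ring_scheme \<Rightarrow> 'a \<Rightarrow> 'a \<Rightarrow> nat \<Rightarrow> 'a" where
  "pow_diff_cofactor R x y 0 = \<zero>\<^bsub>R\<^esub>"
| "pow_diff_cofactor R x y (Suc n) = x [^]\<^bsub>R\<^esub> n \<oplus>\<^bsub>R\<^esub> y \<otimes>\<^bsub>R\<^esub> pow_diff_cofactor R x y n"

lemma (in ring) pow_diff_cofactor_closed [simp]:
  "x \<in> carrier R \<Longrightarrow> y \<in> carrier R \<Longrightarrow> pow_diff_cofactor R x y n \<in> carrier R"
  by (induction n) auto

context cring
begin

lemma mult_pow_diff_cofactor:
  assumes x: "x \<in> carrier R" and y: "y \<in> carrier R"
  shows "(x \<ominus> y) \<otimes> pow_diff_cofactor R x y n = x [^] n \<ominus> y [^] n"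
proof (induction n)
  case 0
  show ?case using x y by (simp add: r_neg a_minus_def)
next
  case (Suc n)
  define T z w where "T = pow_diff_cofactor R x y n" and "z = x [^] n" and "w = y [^] n"
  have closed: "T \<in> carrier R" "z \<in> carrier R" "w \<in> carrier R"
    unfolding T_def z_def w_def using x y by auto
  have "(x \<ominus> y) \<otimes> pow_diff_cofactor R x y (Suc n) = (x \<ominus> y) \<otimes> (z \<oplus> y \<otimes> T)"
    unfolding T_def z_def by simp
  also have "\<dots> = (x \<ominus> y) \<otimes> z \<oplus> y \<otimes> ((x \<ominus> y) \<otimes> T)"
    using x y closed by algebra
  also have "\<dots> = (x \<ominus> y) \<otimes> z \<oplus> y \<otimes> (z \<ominus> w)"
    using Suc.IH unfolding T_def z_def w_def by simp
  also have "\<dots> = z \<otimes> x \<ominus> w \<otimes> y"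
    using x y closed by algebra
  finally show ?case unfolding z_def w_def by simp
qed

lemma pow_diff_cofactor_diag:
  assumes a: "a \<in> carrier R"
  shows "pow_diff_cofactor R a a (Suc n) = [Suc n] \<cdot> (a [^] n)"
proof (induction n)
  case (Suc n)
  have "pow_diff_cofactor R a a (Suc (Suc n)) = a [^] Suc n \<oplus> a \<otimes> [Suc n] \<cdot> (a [^] n)"
    by (simp only: pow_diff_cofactor.simps(2)[of R a a "Suc n"] Suc.IH)
  also have "\<dots> = a [^] Suc n \<oplus> [Suc n] \<cdot> (a [^] Suc n)"
    using a by (simp only: add_pow_rdistr nat_pow_closed nat_pow_Suc2)
  also have "\<dots> = [Suc (Suc n)] \<cdot> (a [^] Suc n)"
    using a by (simp only: add.nat_pow_Suc2[symmetric] nat_pow_closed)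
  finally show ?case .
qed (use a in simp)

end

lemma (in ring_hom_ring) pow_diff_cofactor_hom:
  assumes "x \<in> carrier R" "y \<in> carrier R"
  shows "h (pow_diff_cofactor R x y n) = pow_diff_cofactor S (h x) (h y) n"
proof (induction n)
  case (Suc n)
  have "pow_diff_cofactor R x y n \<in> carrier R"
    using assms by (rule R.pow_diff_cofactor_closed)
  then show ?case using Suc assms by (simp add: hom_nat_pow)
qed simp

lemma (in field) fixed_points_subfield:
  fixes p :: nat
  assumes p: "prime p" and char: "[p] \<cdot> \<one> = \<zero>"
  shows "subfield {x \<in> carrier R. x [^] (p ^ k) = x} R"
proof -
  let ?q = "p ^ k"
  let ?S = "{x \<in> carrier R. x [^] ?q = x}"
  have q_pos: "?q \<noteq> 0" using p by (simp add: prime_gt_0_nat)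
  have "subring ?S R"
  proof (rule subringI)
    fix x assume x: "x \<in> ?S"
    have "(x \<oplus> \<ominus> x) [^] ?q = x [^] ?q \<oplus> (\<ominus> x) [^] ?q"
      using x by (intro frobenius_add_prime_power p char) auto
    then have "(\<ominus> x) [^] ?q \<oplus> x = \<zero>"
      using x q_pos by (simp add: r_neg nat_pow_zero add.m_comm)
    then have "\<ominus> x = (\<ominus> x) [^] ?q"
      using x by (intro minus_equality) auto
    then show "\<ominus> x \<in> ?S" using x by simp
  next
    fix x y assume xy: "x \<in> ?S" "y \<in> ?S"
    then show "x \<otimes> y \<in> ?S" by (simp add: nat_pow_distrib)
    show "x \<oplus> y \<in> ?S" using xy frobenius_add_prime_power[OF _ _ p char] by simp
  qed auto
  moreover have "inv x \<in> ?S" if x: "x \<in> ?S - {\<zero>}" for x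
  proof -
    have u: "x \<in> Units R" using x field_Units by auto
    have "x \<otimes> (inv x) [^] ?q = x [^] ?q \<otimes> (inv x) [^] ?q"
      using x by simp
    also have "\<dots> = (x \<otimes> inv x) [^] ?q"
      using u by (metis Units_closed Units_inv_closed nat_pow_distrib)
    finally have "x \<otimes> (inv x) [^] ?q = \<one>"
      using u by simp
    then have "inv x = (inv x) [^] ?q"
      using x u by (intro comm_inv_char) auto
    then show ?thesis using u by simp
  qed
  ultimately show ?thesis by (intro subfieldI') auto
qed

definition (in ring) fixed_point_poly :: "nat \<Rightarrow> 'a list" where
  "fixed_point_poly q = var R [^]\<^bsub>poly_ring R\<^esub> q \<ominus>\<^bsub>poly_ring R\<^esub> var R"

context domain
begin

lemma fixed_point_poly_closed: "fixed_point_poly q \<in> carrier (poly_ring R)"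
proof -
  interpret P: ring "poly_ring R"
    by (rule univ_poly_is_ring[OF carrier_is_subring])
  show ?thesis
    unfolding fixed_point_poly_def using var_closed(1)[OF carrier_is_subring] by simp
qed

lemma eval_fixed_point_poly:
  assumes "a \<in> carrier R"
  shows "eval (fixed_point_poly q) a = a [^] q \<ominus> a"
proof -
  interpret ev: ring_hom_ring "poly_ring R" R "\<lambda>f. eval f a"
    by (rule eval_ring_hom[OF carrier_is_subring assms])
  show ?thesis
    unfolding fixed_point_poly_def a_minus_def
    using var_closed(1)[OF carrier_is_subring] assms by (simp add: ev.hom_nat_pow eval_var)
qed

lemma degree_fixed_point_poly:
  assumes "q \<ge> 2"
  shows "degree (fixed_point_poly q) = q"
proof -
  interpret P: ring "poly_ring R"
    by (rule univ_poly_is_ring[OF carrier_is_subring])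
  have X: "var R \<in> carrier (poly_ring R)"
    by (rule var_closed(1)[OF carrier_is_subring])
  have monom: "polynomial (carrier R) (monom \<one> q)" "degree (monom \<one> q) = q"
    by (intro monom_is_polynomial[OF carrier_is_subring]) (auto simp: monom_def)
  have minus_X: "polynomial (carrier R) (\<ominus>\<^bsub>poly_ring R\<^esub> var R)" "degree (\<ominus>\<^bsub>poly_ring R\<^esub> var R) = 1"
    using X univ_poly_a_inv_degree[OF carrier_is_subring X] by (simp_all add: univ_poly_carrier var_def)
  have "fixed_point_poly q = poly_add (monom \<one> q) (\<ominus>\<^bsub>poly_ring R\<^esub> var R)"
    unfolding fixed_point_poly_def a_minus_def univ_poly_add
    by (simp add: unitary_monom_eq_var_pow[OF carrier_is_subring])
  then show ?thesis
    using poly_add_degree_eq[OF carrier_is_subring monom(1) minus_X(1)] monom(2) minus_X(2) assms by simp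
qed

lemma poly_of_const_closed: "a \<in> carrier R \<Longrightarrow> poly_of_const a \<in> carrier (poly_ring R)"
  using canonical_embedding_is_hom[OF carrier_is_subring] ring_hom_closed by fastforce

lemma eval_poly_of_const: "a \<in> carrier R \<Longrightarrow> x \<in> carrier R \<Longrightarrow> eval (poly_of_const a) x = a"
  by (cases "a = \<zero>") (auto simp: poly_of_const_def)

lemma var_minus_poly_of_const:
  assumes "a \<in> carrier R"
  shows "var R \<ominus>\<^bsub>poly_ring R\<^esub> poly_of_const a = [\<one>, \<ominus> a]"
proof -
  have "\<ominus>\<^bsub>poly_ring R\<^esub> poly_of_const a = map (\<lambda>b. \<ominus> b) (poly_of_const a)"
    by (rule univ_poly_a_inv_def'[OF carrier_is_subring poly_of_const_closed[OF assms]])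
  then show ?thesis
    using assms unfolding a_minus_def univ_poly_add var_def poly_of_const_def
    by (cases "a = \<zero>") auto
qed

lemma fixed_point_poly_factor:
  assumes a: "a \<in> carrier R" "a [^] q = a"
  shows "fixed_point_poly q = [\<one>, \<ominus> a] \<otimes>\<^bsub>poly_ring R\<^esub>
           (pow_diff_cofactor (poly_ring R) (var R) (poly_of_const a) q \<ominus>\<^bsub>poly_ring R\<^esub> \<one>\<^bsub>poly_ring R\<^esub>)"
proof -
  interpret P: domain "poly_ring R"
    by (rule univ_poly_is_domain[OF carrier_is_subring])
  interpret E: ring_hom_ring "R\<lparr>carrier := carrier R\<rparr>" "poly_ring R" poly_of_const
    by (rule canonical_embedding_ring_hom[OF carrier_is_subring])
  define A T where "A = poly_of_const a" and "T = pow_diff_cofactor (poly_ring R) X A q"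
  have closed: "X \<in> carrier (poly_ring R)" "A \<in> carrier (poly_ring R)" "T \<in> carrier (poly_ring R)"
    unfolding A_def T_def using var_closed(1)[OF carrier_is_subring] poly_of_const_closed[OF a(1)]
    by auto
  have "A [^]\<^bsub>poly_ring R\<^esub> q = poly_of_const (a [^]\<^bsub>R\<lparr>carrier := carrier R\<rparr>\<^esub> q)"
    unfolding A_def using a by (intro E.hom_nat_pow[symmetric]) simp
  then have "A [^]\<^bsub>poly_ring R\<^esub> q = A"
    using a unfolding A_def by (simp add: nat_pow_def)
  then have lin_T: "(X \<ominus>\<^bsub>poly_ring R\<^esub> A) \<otimes>\<^bsub>poly_ring R\<^esub> T = X [^]\<^bsub>poly_ring R\<^esub> q \<ominus>\<^bsub>poly_ring R\<^esub> A"
    unfolding T_def using P.mult_pow_diff_cofactor[OF closed(1,2)] by simp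
  define Y where "Y = X [^]\<^bsub>poly_ring R\<^esub> q"
  have Y: "Y \<in> carrier (poly_ring R)"
    unfolding Y_def using closed by simp
  define lin where "lin = X \<ominus>\<^bsub>poly_ring R\<^esub> A"
  have "lin \<in> carrier (poly_ring R)"
    unfolding lin_def using closed by simp
  then have "lin \<otimes>\<^bsub>poly_ring R\<^esub> (T \<ominus>\<^bsub>poly_ring R\<^esub> \<one>\<^bsub>poly_ring R\<^esub>)
      = lin \<otimes>\<^bsub>poly_ring R\<^esub> T \<ominus>\<^bsub>poly_ring R\<^esub> lin"
    using closed by algebra
  then have "(X \<ominus>\<^bsub>poly_ring R\<^esub> A) \<otimes>\<^bsub>poly_ring R\<^esub> (T \<ominus>\<^bsub>poly_ring R\<^esub> \<one>\<^bsub>poly_ring R\<^esub>)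
      = (X \<ominus>\<^bsub>poly_ring R\<^esub> A) \<otimes>\<^bsub>poly_ring R\<^esub> T \<ominus>\<^bsub>poly_ring R\<^esub> (X \<ominus>\<^bsub>poly_ring R\<^esub> A)"
    unfolding lin_def .
  also have "\<dots> = (Y \<ominus>\<^bsub>poly_ring R\<^esub> A) \<ominus>\<^bsub>poly_ring R\<^esub> (X \<ominus>\<^bsub>poly_ring R\<^esub> A)"
    unfolding lin_T Y_def ..
  also have "\<dots> = Y \<ominus>\<^bsub>poly_ring R\<^esub> X"
    using closed Y by algebra
  finally have "(X \<ominus>\<^bsub>poly_ring R\<^esub> A) \<otimes>\<^bsub>poly_ring R\<^esub> (T \<ominus>\<^bsub>poly_ring R\<^esub> \<one>\<^bsub>poly_ring R\<^esub>)
      = X [^]\<^bsub>poly_ring R\<^esub> q \<ominus>\<^bsub>poly_ring R\<^esub> X"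
    unfolding Y_def .
  then show ?thesis
    unfolding fixed_point_poly_def T_def A_def var_minus_poly_of_const[OF a(1)]
    by simp
qed

end

lemma size_eq_card_set_mset:
  assumes "\<And>x. count M x \<le> 1"
  shows "size M = card (set_mset M)"
proof -
  have "M = mset_set (set_mset M)"
  proof (rule multiset_eqI)
    fix x
    show "count M x = count (mset_set (set_mset M)) x"
    proof (cases "x \<in># M")
      case True
      then have "count M x = 1" using assms[of x] by (simp add: Suc_le_eq le_antisym)
      then show ?thesis using True by (simp add: count_mset_set')
    qed (simp add: count_mset_set' not_in_iff)
  qed
  then show ?thesis by (metis size_mset_set)
qed

lemma (in domain) eval_pow_diff_cofactor_at_root:
  assumes "q > 0" "[q] \<cdot> \<one> = \<zero>" "a \<in> carrier R"
  shows "eval (pow_diff_cofactor (poly_ring R) X (poly_of_const a) q) a = \<zero>"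
proof -
  interpret ev: ring_hom_ring "poly_ring R" R "\<lambda>f. eval f a"
    by (rule eval_ring_hom[OF carrier_is_subring assms(3)])
  obtain m where m: "q = Suc m"
    using assms(1) by (cases q) auto
  have "eval (pow_diff_cofactor (poly_ring R) X (poly_of_const a) q) a = pow_diff_cofactor R a a q"
    using ev.pow_diff_cofactor_hom var_closed(1)[OF carrier_is_subring] poly_of_const_closed assms(3)
    by (simp add: eval_var eval_poly_of_const)
  also have "\<dots> = [q] \<cdot> (a [^] m)"
    unfolding m by (rule pow_diff_cofactor_diag[OF assms(3)])
  also have "\<dots> = ([q] \<cdot> \<one>) \<otimes> a [^] m"
    using assms(3) by (simp add: add_pow_ldistr)
  finally show ?thesis
    using assms by simp
qed

text \<open>X^q - X = (X - a) (T - 1) with T(a) = q a^(q - 1) = 0, so (X - a)^2 does not divide it.\<close>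

lemma (in domain) alg_mult_fixed_point_poly:
  assumes q: "q \<ge> 2" "[q] \<cdot> \<one> = \<zero>" and a: "a \<in> carrier R" "a [^] q = a"
  shows "alg_mult (fixed_point_poly q) a \<le> 1"
proof (rule ccontr)
  interpret P: domain "poly_ring R"
    by (rule univ_poly_is_domain[OF carrier_is_subring])
  interpret ev: ring_hom_ring "poly_ring R" R "\<lambda>f. eval f a"
    by (rule eval_ring_hom[OF carrier_is_subring a(1)])
  define lin g where "lin = [\<one>, \<ominus> a]"
    and "g = pow_diff_cofactor (poly_ring R) X (poly_of_const a) q \<ominus>\<^bsub>poly_ring R\<^esub> \<one>\<^bsub>poly_ring R\<^esub>"
  have closed: "X \<in> carrier (poly_ring R)" "poly_of_const a \<in> carrier (poly_ring R)"
    using var_closed(1)[OF carrier_is_subring] poly_of_const_closed[OF a(1)] by auto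
  have lin: "lin \<in> carrier (poly_ring R)" "lin \<noteq> \<zero>\<^bsub>poly_ring R\<^esub>"
    unfolding lin_def using var_minus_poly_of_const[OF a(1)] P.minus_closed[OF closed]
    by (auto simp: univ_poly_zero)
  have g: "g \<in> carrier (poly_ring R)"
    unfolding g_def using closed by simp
  assume "\<not> alg_mult (fixed_point_poly q) a \<le> 1"
  then have "(lin [^]\<^bsub>poly_ring R\<^esub> (2::nat)) pdivides fixed_point_poly q"
    unfolding lin_def using a(1) fixed_point_poly_closed by (intro le_alg_mult_imp_pdivides) auto
  then obtain c where c: "c \<in> carrier (poly_ring R)"
    and "fixed_point_poly q = (lin \<otimes>\<^bsub>poly_ring R\<^esub> lin) \<otimes>\<^bsub>poly_ring R\<^esub> c"
    unfolding pdivides_def factor_def using lin(1) by (auto simp: numeral_2_eq_2)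
  then have "lin \<otimes>\<^bsub>poly_ring R\<^esub> g = lin \<otimes>\<^bsub>poly_ring R\<^esub> (lin \<otimes>\<^bsub>poly_ring R\<^esub> c)"
    using fixed_point_poly_factor[OF a] lin by (simp add: g_def lin_def P.m_assoc)
  then have "g = lin \<otimes>\<^bsub>poly_ring R\<^esub> c"
    using lin g c by (simp add: P.m_lcancel)
  moreover have "eval lin a = \<zero>"
    unfolding lin_def using a(1) by (simp add: r_neg)
  ultimately have "eval g a = \<zero>"
    using lin c by simp
  moreover have "eval g a = \<ominus> \<one>"
    unfolding g_def using closed eval_pow_diff_cofactor_at_root[OF _ q(2) a(1)] q(1)
    by (simp add: a_minus_def)
  ultimately show False by simp
qed

lemma (in algebraically_closed) card_fixed_points:
  assumes q: "q \<ge> 2" "[q] \<cdot> \<one> = \<zero>"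
  shows "card {x \<in> carrier L. x [^] q = x} = q"
proof -
  define f where "f = fixed_point_poly q"
  have f: "f \<in> carrier (poly_ring L)" "f \<noteq> []"
    unfolding f_def using fixed_point_poly_closed degree_fixed_point_poly[OF q(1)] q(1) by auto
  have root_iff: "x \<in># roots f \<longleftrightarrow> x \<in> carrier L \<and> x [^] q = x" for x
  proof -
    have "x \<in># roots f \<longleftrightarrow> x \<in> carrier L \<and> eval f x = \<zero>"
      using roots_mem_iff_is_root[OF f(1)] f(2) by (simp add: is_root_def)
    also have "\<dots> \<longleftrightarrow> x \<in> carrier L \<and> x [^] q = x"
      by (rule conj_cong) (simp_all add: f_def eval_fixed_point_poly r_right_minus_eq)
    finally show ?thesis .
  qed
  then have roots: "set_mset (roots f) = {x \<in> carrier L. x [^] q = x}"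
    by blast
  have "count (roots f) x \<le> 1" for x
  proof (cases "x \<in># roots f")
    case True
    then have "alg_mult f x \<le> 1"
      using root_iff unfolding f_def by (intro alg_mult_fixed_point_poly q) auto
    then show ?thesis
      using alg_mult_eq_count_roots[OF f(1)] by simp
  qed (simp add: not_in_iff)
  then have "card {x \<in> carrier L. x [^] q = x} = size (roots f)"
    unfolding roots[symmetric] by (rule size_eq_card_set_mset[symmetric])
  also have "\<dots> = q"
    using roots_over_carrier[OF f(1)] degree_fixed_point_poly[OF q(1)] unfolding splitted_def f_def by simp
  finally show ?thesis .
qed

lemma pow_mod_4_eq_3:
  fixes p r :: nat
  assumes "p mod 4 = 3" "odd r"
  shows "p ^ r mod 4 = 3"
proof -
  obtain m where r: "r = Suc (2 * m)"
    using assms(2) by (metis oddE Suc_eq_plus1)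
  have "p ^ r mod 4 = 3 ^ r mod 4"
    using power_mod[of p 4 r] assms(1) by simp
  also have "(3::nat) ^ r = 3 * 9 ^ m"
    unfolding r by (simp add: power_mult)
  also have "3 * 9 ^ m mod 4 = 3 * (9 ^ m mod 4) mod (4::nat)"
    by (rule mod_mult_right_eq[symmetric])
  also have "9 ^ m mod 4 = (9 mod 4) ^ m mod (4::nat)"
    by (rule power_mod[symmetric])
  finally show ?thesis by simp
qed

text \<open>The carrier type is that of the algebraic closure of \<int>/p constructed in HOL-Algebra.\<close>

lemma finite_field_of_prime_power_order:
  fixes p k :: nat
  assumes p: "prime p" and k: "k > 0"
  obtains F :: "((int list \<times> nat) multiset \<Rightarrow> int) ring" where "field F" "order F = p ^ k"
proof -
  define Zp where "Zp = residue_ring (int p)"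
  interpret Zp: residues_prime p Zp
    unfolding Zp_def by unfold_locales (use p in auto)
  define L where "L = Zp.alg_closure"
  interpret L: algebraic_closure L "Zp.indexed_const ` carrier Zp"
    unfolding L_def by (rule Zp.alg_closureE(1))
  interpret emb: ring_hom_ring Zp L Zp.indexed_const
    by (rule ring_hom_ringI2[OF Zp.ring_axioms L.ring_axioms]) (use Zp.alg_closureE(2) in \<open>simp add: L_def\<close>)
  have "[n] \<cdot>\<^bsub>Zp\<^esub> \<one>\<^bsub>Zp\<^esub> = int n mod int p" for n :: nat
    by (induction n) (simp_all add: Zp.res_zero_eq Zp.res_add_eq Zp.res_one_eq mod_add_right_eq add.commute)
  then have "[p] \<cdot>\<^bsub>Zp\<^esub> \<one>\<^bsub>Zp\<^esub> = \<zero>\<^bsub>Zp\<^esub>"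
    by (simp add: Zp.res_zero_eq)
  moreover have "Zp.indexed_const ([p] \<cdot>\<^bsub>Zp\<^esub> \<one>\<^bsub>Zp\<^esub>) = [p] \<cdot>\<^bsub>L\<^esub> \<one>\<^bsub>L\<^esub>"
    using group_hom.hom_nat_pow[OF emb.a_group_hom, of "\<one>\<^bsub>Zp\<^esub>" p] by (simp add: add_pow_def)
  ultimately have char: "[p] \<cdot>\<^bsub>L\<^esub> \<one>\<^bsub>L\<^esub> = \<zero>\<^bsub>L\<^esub>"
    by simp
  define S where "S = {x \<in> carrier L. x [^]\<^bsub>L\<^esub> (p ^ k) = x}"
  have "field (L\<lparr>carrier := S\<rparr>)"
    unfolding S_def using L.fixed_points_subfield[OF p char] by (rule L.subfield_iff(2))
  moreover have "card S = p ^ k"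
  proof -
    have "p ^ k = p * p ^ (k - 1)"
      using k by (simp add: power_eq_if)
    then have "[(p ^ k)] \<cdot>\<^bsub>L\<^esub> \<one>\<^bsub>L\<^esub> = \<zero>\<^bsub>L\<^esub>"
      using L.add_pow_char_mult[OF char, of "\<one>\<^bsub>L\<^esub>" "p ^ (k - 1)"] by simp
    moreover have "2 \<le> p" "p \<le> p ^ k"
      using prime_ge_2_nat[OF p] k by (simp_all add: self_le_power)
    ultimately show ?thesis
      unfolding S_def by (intro L.card_fixed_points) auto
  qed
  then have "order (L\<lparr>carrier := S\<rparr>) = p ^ k"
    by (simp add: order_def)
  ultimately show ?thesis by (rule that)
qed

lemma hadamard_core_prime_power:
  assumes p: "prime p" "p mod 4 = 3" and r: "odd r"
  shows "\<exists>C. hadamard_core (p ^ r) C"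
proof -
  obtain F :: "((int list \<times> nat) multiset \<Rightarrow> int) ring" where F: "field F" "order F = p ^ r"
    using finite_field_of_prime_power_order[OF p(1)] r by (metis odd_pos)
  interpret F: paley_field F
    using F pow_mod_4_eq_3[OF p(2) r] by (intro paley_field.intro paley_field_axioms.intro) auto
  obtain e where "bij_betw e {..<order F} (carrier F)"
    using ex_bij_betw_nat_finite[OF F.finite_carrier] unfolding order_def atLeast0LessThan by blast
  then show ?thesis
    using F.hadamard_core_paley_matrix F(2) by metis
qed

theorem proposition3p1:
  shows "\<exists>\<delta> :: nat \<Rightarrow> real.
    (\<forall>n. \<delta> n \<ge> 0) \<and> \<delta> \<longlonglongrightarrow> 0 \<and>
    (\<forall>n::nat. n > 0 \<and> hadamard_exists (n + 1) \<longrightarrow>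
        (\<exists>M. orthogonal_mat n M \<and> flat_entries (\<delta> n) n M)) \<and>
    (\<forall>(p::nat) (r::nat). prime p \<and> p mod 4 = 3 \<and> odd r \<longrightarrow>
        hadamard_exists (p ^ r + 1) \<and>
        (\<exists>M. orthogonal_mat (p ^ r) M \<and> flat_entries (\<delta> (p ^ r)) (p ^ r) M)) \<and>
    (\<forall>n::nat. prime n \<and> n mod 4 = 3 \<longrightarrow>
        (\<exists>M. orthogonal_mat n M \<and> flat_entries (\<delta> n) n M \<and> circulant_mat n M))"
proof -
  have flat: "orthogonal_mat n (flattened_core n C) \<and> flat_entries (flatness_defect n) n (flattened_core n C)"
    if "n > 0" "hadamard_core n C" for n C
    using orthogonal_mat_flattened_core[OF that] flat_entries_flattened_core[OF that] by blast
  have part_i: "\<exists>M. orthogonal_mat n M \<and> flat_entries (flatness_defect n) n M"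
    if "n > 0" "hadamard_exists (n + 1)" for n
    using that hadamard_core_exists flat by blast
  have prime_power: "hadamard_exists (p ^ r + 1) \<and>
      (\<exists>M. orthogonal_mat (p ^ r) M \<and> flat_entries (flatness_defect (p ^ r)) (p ^ r) M)"
    if pr: "prime p" "p mod 4 = 3" "odd r" for p r :: nat
  proof -
    obtain C where C: "hadamard_core (p ^ r) C"
      using hadamard_core_prime_power[OF pr] by blast
    moreover have "p ^ r > 0"
      using pr(1) by (simp add: prime_gt_0_nat)
    ultimately show ?thesis
      using hadamard_exists_of_core flat by blast
  qed
  have part_ii: "\<exists>M. orthogonal_mat n M \<and> flat_entries (flatness_defect n) n M \<and> circulant_mat n M"
    if n: "prime n" "n mod 4 = 3" for n
  proof -
    obtain C where "hadamard_core n C" "circulant_mat n (\<lambda>i j. real_of_int (C i j))"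
      using hadamard_core_prime_circulant[OF n] by blast
    then show ?thesis
      using flat circulant_mat_flattened_core n(1) prime_gt_0_nat by blast
  qed
  show ?thesis
    using flatness_defect_nonneg flatness_defect_tendsto_0 part_i prime_power part_ii by blast
qed

end
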